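(* With the notation of the context, if $Q(\alpha_i)=Q^*(\alpha_i)=\lg\frac{N+i}{N+i-1}$ for all $1\le i\le N$, then $L(Q)=H(p)+D(p\|q)$.
   Context: Let $\mathcal S$ be a finite alphabet with $|\mathcal S|\ge2$, $p$ a probability distribution on $\mathcal S$ with $p(s)>0$, $N_s$ ($s\in\mathcal S$) positive integers, $N=\sum_sN_s$, $q(s)=N_s/N$, $\lg=\log_2$, and $\kappa_s=\lceil\lg(N/N_s)\rceil$ (so $\kappa_s\ge1$ and $N\le 2^{\kappa_s}N_s<2N$). Let $\alpha_1,\dots,\alpha_N$ be the states. For a probability distribution $Q$ on $\{\alpha_1,\dots,\alpha_N\}$ define $L(Q)=\sum_s p(s)\sum_{i=1}^N Q(\alpha_i)\ell_s(i)$, where $\ell_s(i)=\kappa_s-1$ if $i\le 2^{\kappa_s}N_s-N$ and $\ell_s(i)=\kappa_s$ otherwise. (This is the average code length of the Yokoo–Dubé-type sAEDS, whose state $\alpha_i$ encodes $s$ with $\ell_s(i)$ bits, when $Q$ is its stationary distribution with states indexed in non-increasing order of $Q$.) $Q^*(\alpha_i)=\lg\frac{N+i}{N+i-1}$, which sums to 1. $H(p)=-\sum p\lg p$, $D(p\|q)=\sum p\lg(p/q)$. *)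

theory Defs
  imports Complex_Main
begin

definition totN :: "('s::finite \<Rightarrow> nat) \<Rightarrow> nat" where
  "totN Ns = (\<Sum>s\<in>UNIV. Ns s)"

definition qdist :: "('s::finite \<Rightarrow> nat) \<Rightarrow> 's \<Rightarrow> real" where
  "qdist Ns s = real (Ns s) / real (totN Ns)"

definition kappa :: "('s::finite \<Rightarrow> nat) \<Rightarrow> 's \<Rightarrow> nat" where
  "kappa Ns s = nat \<lceil>log 2 (real (totN Ns) / real (Ns s))\<rceil>"

definition ell :: "('s::finite \<Rightarrow> nat) \<Rightarrow> 's \<Rightarrow> nat \<Rightarrow> real" where
  "ell Ns s i = (if int i \<le> 2 ^ kappa Ns s * int (Ns s) - int (totN Ns)
                 then real (kappa Ns s) - 1 else real (kappa Ns s))"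

text \<open>Average code length L(Q); Q i is the probability of state alpha_i (1 \<le> i \<le> N).\<close>
definition avg_len :: "('s::finite \<Rightarrow> real) \<Rightarrow> ('s \<Rightarrow> nat) \<Rightarrow> (nat \<Rightarrow> real) \<Rightarrow> real" where
  "avg_len p Ns Q = (\<Sum>s\<in>UNIV. p s * (\<Sum>i=1..totN Ns. Q i * ell Ns s i))"

definition Qstar :: "nat \<Rightarrow> nat \<Rightarrow> real" where
  "Qstar N i = log 2 ((real N + real i) / (real N + real i - 1))"

definition entropy2 :: "('s::finite \<Rightarrow> real) \<Rightarrow> real" where
  "entropy2 p = - (\<Sum>s\<in>UNIV. p s * log 2 (p s))"

definition kl_div2 :: "('s::finite \<Rightarrow> real) \<Rightarrow> ('s \<Rightarrow> real) \<Rightarrow> real" where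
  "kl_div2 p q = (\<Sum>s\<in>UNIV. p s * log 2 (p s / q s))"

end

theory Submission
  imports Defs
begin

text \<open>The weights Q* telescope: the first m of them sum to lg((N+m)/N), so they form a
  distribution on N states. Write M = 2^kappa_s N_s - N, which lies in [0, N) by the choice of
  kappa_s. Under Q*, symbol s costs kappa_s bits minus one bit on the first M states, so its
  expected length is kappa_s - lg((N+M)/N) = kappa_s - lg(2^kappa_s N_s/N) = lg(N/N_s) = -lg q(s).
  Averaging over p gives the cross entropy, which is H(p) + D(p||q). The identity holds symbol by
  symbol.\<close>

lemma Qstar_Suc_eq_log_diff:
  assumes "N > 0"
  shows "Qstar N (Suc j) = log 2 (real N + real (Suc j)) - log 2 (real N + real j)"
  using assms by (simp add: Qstar_def log_divide add_pos_nonneg)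

lemma sum_Qstar_telescope:
  assumes "N > 0"
  shows "(\<Sum>i=1..m. Qstar N i) = log 2 ((real N + real m) / real N)"
proof -
  have "(\<Sum>i=1..m. Qstar N i) = (\<Sum>j<m. Qstar N (Suc j))"
    by (simp add: sum.atLeast1_atMost_eq)
  also have "\<dots> = (\<Sum>j<m. log 2 (real N + real (Suc j)) - log 2 (real N + real j))"
    by (simp only: Qstar_Suc_eq_log_diff[OF assms])
  also have "\<dots> = log 2 (real N + real m) - log 2 (real N + real 0)"
    by (rule sum_lessThan_telescope[where f = "\<lambda>j. log 2 (real N + real j)"])
  also have "\<dots> = log 2 ((real N + real m) / real N)"
    using assms by (simp add: log_divide add_pos_nonneg)
  finally show ?thesis .
qed

lemma sum_Qstar_total: "N > 0 \<Longrightarrow> (\<Sum>i=1..N. Qstar N i) = 1"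
  using sum_Qstar_telescope[of N N] by simp

lemma sum_Qstar_initial_segment:
  assumes "N > 0" and "M \<le> N"
  shows "(\<Sum>i=1..N. Qstar N i * of_bool (i \<le> M)) = log 2 ((real N + real M) / real N)"
proof -
  have "{1..N} \<inter> {i. i \<le> M} = {1..M}"
    using assms(2) by auto
  then show ?thesis
    using sum_Qstar_telescope[OF assms(1), of M] by simp
qed

lemma two_power_nat_ceiling_log_bounds:
  fixes x :: real
  assumes "x \<ge> 1"
  shows "x \<le> 2 ^ nat \<lceil>log 2 x\<rceil>" and "2 ^ nat \<lceil>log 2 x\<rceil> < 2 * x"
proof -
  define k where "k = nat \<lceil>log 2 x\<rceil>"
  have k: "real k = of_int \<lceil>log 2 x\<rceil>"
    using assms by (simp add: k_def)
  have "log 2 x \<le> real k"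
    using k by linarith
  then show "x \<le> 2 ^ nat \<lceil>log 2 x\<rceil>"
    using assms by (simp add: k_def[symmetric] log_le_iff powr_realpow)
  have "log 2 (2 * x) = 1 + log 2 x"
    using assms by (simp add: log_mult)
  then have "real k < log 2 (2 * x)"
    using k by linarith
  then show "2 ^ nat \<lceil>log 2 x\<rceil> < 2 * x"
    using assms by (simp add: k_def[symmetric] less_log_iff powr_realpow)
qed

lemma le_totN: "Ns s \<le> totN Ns"
  unfolding totN_def by (rule member_le_sum) auto

lemma totN_kappa_bounds:
  assumes "Ns s > 0"
  shows "totN Ns \<le> 2 ^ kappa Ns s * Ns s" and "2 ^ kappa Ns s * Ns s < 2 * totN Ns"
proof -
  let ?x = "real (totN Ns) / real (Ns s)"
  have "?x \<ge> 1"
    using assms le_totN[of Ns s] by simp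
  from two_power_nat_ceiling_log_bounds[OF this]
  have "real (totN Ns) \<le> real (2 ^ kappa Ns s * Ns s)"
    and "real (2 ^ kappa Ns s * Ns s) < real (2 * totN Ns)"
    using assms by (simp_all add: kappa_def field_simps)
  then show "totN Ns \<le> 2 ^ kappa Ns s * Ns s" and "2 ^ kappa Ns s * Ns s < 2 * totN Ns"
    by (simp_all only: of_nat_le_iff of_nat_less_iff)
qed

lemma ell_eq_kappa_minus_indicator:
  assumes "Ns s > 0"
  shows "ell Ns s i = real (kappa Ns s) - of_bool (i \<le> 2 ^ kappa Ns s * Ns s - totN Ns)"
proof -
  have diff: "int (2 ^ kappa Ns s * Ns s - totN Ns) = 2 ^ kappa Ns s * int (Ns s) - int (totN Ns)"
    using totN_kappa_bounds(1)[of Ns s, OF assms] by (simp add: of_nat_diff)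
  then show ?thesis
    by (simp add: ell_def flip: diff)
qed

lemma sum_Qstar_ell:
  assumes "Ns s > 0"
  shows "(\<Sum>i=1..totN Ns. Qstar (totN Ns) i * ell Ns s i) = log 2 (real (totN Ns) / real (Ns s))"
proof -
  define N where "N = totN Ns"
  define k where "k = kappa Ns s"
  define M where "M = 2 ^ k * Ns s - N"
  have N: "N > 0"
    using assms le_totN[of Ns s] by (simp add: N_def)
  have M: "M \<le> N" "real N + real M = 2 ^ k * real (Ns s)"
    using totN_kappa_bounds[of Ns s, OF assms] by (simp_all add: M_def N_def k_def)
  have "(\<Sum>i=1..N. Qstar N i * ell Ns s i)
      = real k * (\<Sum>i=1..N. Qstar N i) - (\<Sum>i=1..N. Qstar N i * of_bool (i \<le> M))"
    unfolding ell_eq_kappa_minus_indicator[of Ns s, OF assms] N_def[symmetric] k_def[symmetric]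
      M_def[symmetric]
    by (simp add: right_diff_distrib sum_subtractf sum_distrib_left mult.commute)
  also have "\<dots> = real k - log 2 (2 ^ k * real (Ns s) / real N)"
    using N M by (simp only: sum_Qstar_total sum_Qstar_initial_segment)
  also have "\<dots> = log 2 (real N / real (Ns s))"
    using N assms by (simp add: log_mult log_divide log_nat_power)
  finally show ?thesis
    by (simp add: N_def)
qed

lemma entropy2_plus_kl_div2:
  assumes "\<And>s. p s > 0" and "\<And>s. q s > 0"
  shows "entropy2 p + kl_div2 p q = (\<Sum>s\<in>UNIV. p s * - log 2 (q s))"
proof -
  have "p s * log 2 (p s / q s) = p s * log 2 (p s) - p s * log 2 (q s)" for s
    using assms(1)[of s] assms(2)[of s] by (simp add: log_divide right_diff_distrib)
  then show ?thesis
    by (simp add: entropy2_def kl_div2_def sum_subtractf sum_negf)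
qed

lemma qdist_pos: "Ns s > 0 \<Longrightarrow> qdist Ns s > 0"
  using le_totN[of Ns s] by (simp add: qdist_def)

lemma neg_log_qdist:
  assumes "Ns s > 0"
  shows "- log 2 (qdist Ns s) = log 2 (real (totN Ns) / real (Ns s))"
  using assms le_totN[of Ns s] by (simp add: qdist_def log_divide)

theorem lemma1:
  fixes p :: "'s::finite \<Rightarrow> real" and Ns :: "'s \<Rightarrow> nat" and Q :: "nat \<Rightarrow> real"
  assumes "card (UNIV :: 's set) \<ge> 2"
    and "\<And>s. p s > 0"
    and "(\<Sum>s\<in>UNIV. p s) = 1"
    and "\<And>s. Ns s > 0"
    and "\<And>i. 1 \<le> i \<Longrightarrow> i \<le> totN Ns \<Longrightarrow> Q i = Qstar (totN Ns) i"
  shows "avg_len p Ns Q = entropy2 p + kl_div2 p (qdist Ns)"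
proof -
  have "avg_len p Ns Q = (\<Sum>s\<in>UNIV. p s * (\<Sum>i=1..totN Ns. Qstar (totN Ns) i * ell Ns s i))"
    unfolding avg_len_def using assms(5) by (intro sum.cong refl arg_cong2[where f = "(*)"]) auto
  also have "\<dots> = (\<Sum>s\<in>UNIV. p s * - log 2 (qdist Ns s))"
    using assms(4) sum_Qstar_ell[of Ns] neg_log_qdist[of Ns] by simp
  also have "\<dots> = entropy2 p + kl_div2 p (qdist Ns)"
    by (rule entropy2_plus_kl_div2[symmetric, OF assms(2) qdist_pos[OF assms(4)]])
  finally show ?thesis .
qed

end
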